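(* Let $B$ and $C$ be sets and let $s,t:B\to C$ be bijections such that $s(a)\neq t(a)$ for all $a\in B$. Then there is a decomposition of $B$ into three pairwise disjoint subsets $B=B_0\sqcup B_1\sqcup B_2$ such that $s(B_i)\cap t(B_i)=\varnothing$ for each $i\in\{0,1,2\}$. *)

theory Defs
  imports Main
begin

end

theory Submission
  imports Defs
begin

(*
  The theorem is a graph colouring statement.  Join a, b \<in> B whenever s a = t b.
  Since s and t are injective, every vertex a has at most two neighbours
  (the unique b with t b = s a and the unique b with s b = t a), and since
  s a \<noteq> t a there are no loops.  A colour class B_i then satisfies
  s ` B_i \<inter> t ` B_i = {} exactly when it contains no edge, so the theorem says
  that this graph of maximal degree two is 3-colourable.

  We prove the general fact that a loopless graph on an arbitrary (possibly
  infinite) vertex set in which every vertex has fewer than k neighbours is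
  k-colourable: by Zorn's lemma there is a maximal proper partial colouring,
  and a maximal one is total because an uncoloured vertex sees fewer than k
  colours among its neighbours and could be coloured with a free one.
*)

definition proper_partial_colouring ::
    "('a \<Rightarrow> 'a \<Rightarrow> bool) \<Rightarrow> 'a set \<Rightarrow> nat \<Rightarrow> ('a \<times> nat) set \<Rightarrow> bool" where
  "proper_partial_colouring E V k P \<longleftrightarrow>
     P \<subseteq> V \<times> {..<k} \<and> single_valued P
     \<and> (\<forall>a b i. (a, i) \<in> P \<longrightarrow> (b, i) \<in> P \<longrightarrow> \<not> E a b)"

definition neighbours :: "('a \<Rightarrow> 'a \<Rightarrow> bool) \<Rightarrow> 'a set \<Rightarrow> 'a \<Rightarrow> 'a set" where
  "neighbours E V a = {b \<in> V. E a b \<or> E b a}"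

lemma proper_partial_colouring_chain_Union:
  assumes "Ch \<in> chains {P. proper_partial_colouring E V k P}"
  shows "proper_partial_colouring E V k (\<Union>Ch)"
proof -
  have members: "\<And>P. P \<in> Ch \<Longrightarrow> proper_partial_colouring E V k P"
    and linear: "\<And>P Q. P \<in> Ch \<Longrightarrow> Q \<in> Ch \<Longrightarrow> P \<subseteq> Q \<or> Q \<subseteq> P"
    using assms unfolding chains_def chain_subset_def by auto
  have common: "\<exists>P\<in>Ch. x \<in> P \<and> y \<in> P" if "x \<in> \<Union>Ch" "y \<in> \<Union>Ch" for x y
    using that linear by blast
  show ?thesis
    unfolding proper_partial_colouring_def
  proof (intro conjI allI impI single_valuedI)
    show "\<Union>Ch \<subseteq> V \<times> {..<k}"
      using members unfolding proper_partial_colouring_def by blast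
  next
    fix a i j assume "(a, i) \<in> \<Union>Ch" "(a, j) \<in> \<Union>Ch"
    then obtain P where "P \<in> Ch" "(a, i) \<in> P" "(a, j) \<in> P" using common by blast
    then show "i = j"
      using members unfolding proper_partial_colouring_def by (blast dest: single_valuedD)
  next
    fix a b i assume "(a, i) \<in> \<Union>Ch" "(b, i) \<in> \<Union>Ch"
    then obtain P where "P \<in> Ch" "(a, i) \<in> P" "(b, i) \<in> P" using common by blast
    then show "\<not> E a b"
      using members unfolding proper_partial_colouring_def by blast
  qed
qed

text \<open>An uncoloured loop-free vertex with fewer than k neighbours can be
  coloured: its neighbours use fewer than k colours, so one colour is free.\<close>

lemma proper_partial_colouring_extend:
  assumes P: "proper_partial_colouring E V k P"
    and a: "a \<in> V" "a \<notin> Domain P" "\<not> E a a"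
    and deg: "finite (neighbours E V a)" "card (neighbours E V a) < k"
  obtains i where "proper_partial_colouring E V k (insert (a, i) P)"
proof -
  define used where "used = {i. \<exists>b \<in> neighbours E V a. (b, i) \<in> P}"
  have used_sub: "used \<subseteq> (\<lambda>b. THE i. (b, i) \<in> P) ` neighbours E V a"
  proof
    fix i assume "i \<in> used"
    then obtain b where b: "b \<in> neighbours E V a" "(b, i) \<in> P" unfolding used_def by blast
    with P have "(THE i. (b, i) \<in> P) = i"
      unfolding proper_partial_colouring_def by (blast dest: single_valuedD)
    with b show "i \<in> (\<lambda>b. THE i. (b, i) \<in> P) ` neighbours E V a" by blast
  qed
  have "finite used"
    using finite_surj[OF deg(1) used_sub] .
  have "card used < k"
    using card_mono[OF finite_imageI[OF deg(1)] used_sub]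
      card_image_le[OF deg(1), of "\<lambda>b. THE i. (b, i) \<in> P"] deg(2)
    by linarith
  with \<open>finite used\<close> obtain i where i: "i < k" "i \<notin> used"
    by (metis card_lessThan card_mono not_le subsetI lessThan_iff)
  have "proper_partial_colouring E V k (insert (a, i) P)"
    using P a i unfolding proper_partial_colouring_def used_def neighbours_def
    by (auto simp: single_valued_def Domain.simps)
  then show thesis by (rule that)
qed

theorem bounded_degree_colouring:
  assumes loopless: "\<And>a. a \<in> V \<Longrightarrow> \<not> E a a"
    and deg: "\<And>a. a \<in> V \<Longrightarrow> finite (neighbours E V a) \<and> card (neighbours E V a) < k"
  obtains c :: "'a \<Rightarrow> nat"
  where "\<And>a. a \<in> V \<Longrightarrow> c a < k"
    and "\<And>a b. a \<in> V \<Longrightarrow> b \<in> V \<Longrightarrow> E a b \<Longrightarrow> c a \<noteq> c b"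
proof -
  obtain M where M: "proper_partial_colouring E V k M"
    and maximal: "\<And>P. proper_partial_colouring E V k P \<Longrightarrow> M \<subseteq> P \<Longrightarrow> P = M"
  proof -
    have "\<forall>Ch\<in>chains {P. proper_partial_colouring E V k P}.
            \<Union>Ch \<in> {P. proper_partial_colouring E V k P}"
      using proper_partial_colouring_chain_Union by blast
    from Zorn_Lemma[OF this] show thesis using that by blast
  qed
  have total: "a \<in> Domain M" if aV: "a \<in> V" for a
  proof (rule ccontr)
    assume "a \<notin> Domain M"
    then obtain i where "proper_partial_colouring E V k (insert (a, i) M)"
      using proper_partial_colouring_extend[OF M aV _ loopless[OF aV]] deg[OF aV] by blast
    with maximal have "insert (a, i) M = M" by blast
    with \<open>a \<notin> Domain M\<close> show False by blast
  qed
  define c where "c a = (THE i. (a, i) \<in> M)" for a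
  have colour: "(a, c a) \<in> M" if aV: "a \<in> V" for a
  proof -
    obtain i where "(a, i) \<in> M" using total[OF aV] by blast
    with M show ?thesis
      unfolding c_def proper_partial_colouring_def
      by (metis single_valuedD the_equality)
  qed
  show thesis
  proof
    show "c a < k" if "a \<in> V" for a
      using colour[OF that] M unfolding proper_partial_colouring_def by blast
    show "c a \<noteq> c b" if "a \<in> V" "b \<in> V" "E a b" for a b
      using colour[OF that(1)] colour[OF that(2)] that(3) M
      unfolding proper_partial_colouring_def by auto
  qed
qed

lemma inj_on_fibre_subset_singleton:
  assumes "inj_on f A"
  obtains x where "{b \<in> A. f b = y} \<subseteq> {x}"
proof (cases "\<exists>x\<in>A. f x = y")
  case True
  then obtain x where "x \<in> A" "f x = y" by blast
  with assms have "{b \<in> A. f b = y} \<subseteq> {x}" by (auto dest: inj_onD)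
  then show thesis by (rule that)
next
  case False
  then have "{b \<in> A. f b = y} \<subseteq> {undefined}" by blast
  then show thesis by (rule that)
qed

lemma two_injections_degree_le_2:
  assumes "inj_on s B" "inj_on t B"
  shows "finite (neighbours (\<lambda>a b. s a = t b) B a)
         \<and> card (neighbours (\<lambda>a b. s a = t b) B a) \<le> 2"
proof -
  obtain x where x: "{b \<in> B. t b = s a} \<subseteq> {x}"
    using inj_on_fibre_subset_singleton[OF assms(2)] by blast
  obtain y where y: "{b \<in> B. s b = t a} \<subseteq> {y}"
    using inj_on_fibre_subset_singleton[OF assms(1)] by blast
  have sub: "neighbours (\<lambda>a b. s a = t b) B a \<subseteq> {x, y}"
    using x y unfolding neighbours_def by auto
  have "finite (neighbours (\<lambda>a b. s a = t b) B a)"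
    using sub by (rule finite_subset) simp
  moreover have "card (neighbours (\<lambda>a b. s a = t b) B a) \<le> card {x, y}"
    using sub by (intro card_mono) simp_all
  moreover have "card {x, y} \<le> 2"
    by (simp add: card_insert_if)
  ultimately show ?thesis by simp
qed

text \<open>The main result: the colour classes of a proper 3-colouring of the graph
  joining a to b when s a = t b.\<close>

theorem lemma3p5:
  fixes B :: "'a set" and C :: "'b set" and s t :: "'a \<Rightarrow> 'b"
  assumes "bij_betw s B C" and "bij_betw t B C"
    and "\<And>a. a \<in> B \<Longrightarrow> s a \<noteq> t a"
  shows "\<exists>B0 B1 B2. B = B0 \<union> B1 \<union> B2
           \<and> B0 \<inter> B1 = {} \<and> B0 \<inter> B2 = {} \<and> B1 \<inter> B2 = {}
           \<and> s ` B0 \<inter> t ` B0 = {} \<and> s ` B1 \<inter> t ` B1 = {}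
           \<and> s ` B2 \<inter> t ` B2 = {}"
proof -
  have "inj_on s B" "inj_on t B"
    using assms(1,2) by (auto simp: bij_betw_def)
  then have degree: "finite (neighbours (\<lambda>a b. s a = t b) B a)
      \<and> card (neighbours (\<lambda>a b. s a = t b) B a) < 3" for a
    using two_injections_degree_le_2[of s B t a] by linarith
  obtain c :: "'a \<Rightarrow> nat"
    where c_range: "\<And>a. a \<in> B \<Longrightarrow> c a < 3"
      and c_proper: "\<And>a b. a \<in> B \<Longrightarrow> b \<in> B \<Longrightarrow> s a = t b \<Longrightarrow> c a \<noteq> c b"
    using bounded_degree_colouring[of B "\<lambda>a b. s a = t b" 3] assms(3) degree by blast
  define colour_class where "colour_class i = {a \<in> B. c a = i}" for i :: nat
  have "c a \<in> {0, 1, 2}" if "a \<in> B" for a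
    using c_range[OF that] by auto
  then have "B = colour_class 0 \<union> colour_class 1 \<union> colour_class 2"
    unfolding colour_class_def by blast
  moreover have "i \<noteq> j \<Longrightarrow> colour_class i \<inter> colour_class j = {}" for i j
    unfolding colour_class_def by blast
  moreover have "s ` colour_class i \<inter> t ` colour_class i = {}" for i
    using c_proper unfolding colour_class_def by blast
  ultimately show ?thesis
    by (intro exI[of _ "colour_class 0"] exI[of _ "colour_class 1"] exI[of _ "colour_class 2"])
      simp
qed

end
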